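(* In the BICM setting described in the context, with message $1$ transmitted and $\mathsf D$ the ORBGRAND metric, for any $w'\ne1$ and any $\theta<0$, almost surely $$\lim_{N\to\infty}\frac1N\ln\mathbb E\big\{e^{N\theta\mathsf D(w')}\,\big|\,\underline{\mathsf T}\big\}=m\int_0^1\ln\big(1+e^{\frac\theta m t}\big)\,\mathrm dt-m\ln2.$$
   Context: Let $m\ge1$, let $\mathcal S$ be a constellation with $|\mathcal S|=2^m$, and let $\mu:\{+1,-1\}^m\to\mathcal S$ be a bijective labeling. For $s\in\mathcal S$, let $b_j(s)$ be the $j$-th coordinate of $\mu^{-1}(s)$. The channel is memoryless with output space $\mathbb R^d$ (norm $|\cdot|$) and transition densities $p(y\mid s)$. For $j=1,\dots,m$ define $$q_j^\pm(y)=2^{-(m-1)}\sum_{s:\,b_j(s)=\pm1}p(y\mid s).$$ For each $j$, let $\mathsf X_j$ be uniform on $\{\pm1\}$ and let $\mathsf Y$ have density $q_j^{\mathsf X_j}$ given $\mathsf X_j$. Let $\Psi_j$ be the CDF of $|\ln(q_j^+(\mathsf Y)/q_j^-(\mathsf Y))|$, and let $\bar\Psi=\frac1m\sum_j\Psi_j$. Assume that for each $j$: (A1) there exist $M_1>0$, $a>0$ and a polynomial $S_1$ with $q_j^\pm(y)<S_1(|y|)e^{-a|y|}$ for $|y|>M_1$; (A2) there exist $M_2>0$ and a polynomial $S_2$ with $|\ln(q_j^+(y)/q_j^-(y))|<S_2(|y|)$ for $|y|>M_2$; (A3) $\Psi_j$, $\Psi_j^{-1}$, $\bar\Psi$ and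 $\bar\Psi^{-1}$ are smooth with finite first, second and third derivatives. Random coding: the codebook has $\lceil e^{NR}\rceil$ codewords, each consisting of bits $\mathsf X_{i,j}(w)$, $i\le N$, $j\le m$, all i.i.d. uniform on $\{\pm1\}$. Message $1$ is transmitted. Symbol $i$ is $s_i(1)=\mu(\mathsf X_{i,1}(1),\dots,\mathsf X_{i,m}(1))$, and the outputs $\mathsf Y_i$ are conditionally independent with densities $p(\cdot\mid s_i(1))$. Let $\mathsf T_{i,j}=\ln(q_j^+(\mathsf Y_i)/q_j^-(\mathsf Y_i))$, and let $\underline{\mathsf T}$ be the collection of all $\mathsf T_{i,j}$. Let $\mathsf R_{i,j}$ be the rank of $|\mathsf T_{i,j}|$ among all $mN$ values (rank $1$ is the smallest). Let $\mathrm{sgn}(t)=1$ if $t\ge0$ and $-1$ otherwise. The ORBGRAND metric is $$\mathsf D(w)=\frac1{mN}\sum_{i,j}\frac{\mathsf R_{i,j}}{mN}\mathbf 1\big(\mathrm{sgn}(\mathsf T_{i,j})\mathsf X_{i,j}(w)<0\big).$$ *)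

theory Defs
  imports "HOL-Probability.Probability" "HOL-Computational_Algebra.Polynomial"
begin

definition bitvecs :: "nat \<Rightarrow> int list set" where
  "bitvecs m = {xs. length xs = m \<and> set xs \<subseteq> {-1, 1}}"

definition labbit :: "(int list \<Rightarrow> 's) \<Rightarrow> nat \<Rightarrow> 's \<Rightarrow> nat \<Rightarrow> int" where
  "labbit \<mu> m s j = (inv_into (bitvecs m) \<mu> s) ! j"

definition qfun :: "'s set \<Rightarrow> (int list \<Rightarrow> 's) \<Rightarrow> nat \<Rightarrow> ('s \<Rightarrow> 'y \<Rightarrow> real)
    \<Rightarrow> nat \<Rightarrow> int \<Rightarrow> 'y \<Rightarrow> real" where
  "qfun S \<mu> m p j b y = (1/2) ^ (m - 1) * (\<Sum>s\<in>{s\<in>S. labbit \<mu> m s j = b}. p s y)"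

definition llr :: "'s set \<Rightarrow> (int list \<Rightarrow> 's) \<Rightarrow> nat \<Rightarrow> ('s \<Rightarrow> 'y \<Rightarrow> real)
    \<Rightarrow> nat \<Rightarrow> 'y \<Rightarrow> real" where
  "llr S \<mu> m p j y = ln (qfun S \<mu> m p j 1 y / qfun S \<mu> m p j (-1) y)"

text \<open>Psi_j: CDF of |llr_j(Y)| where Y has density (q_j^+ + q_j^-)/2
  (i.e. X_j uniform, Y given X_j with density q_j^{X_j}).\<close>
definition Psi :: "'s set \<Rightarrow> (int list \<Rightarrow> 's) \<Rightarrow> nat \<Rightarrow> ('s \<Rightarrow> 'y::euclidean_space \<Rightarrow> real)
    \<Rightarrow> nat \<Rightarrow> real \<Rightarrow> real" where
  "Psi S \<mu> m p j t = (\<integral>y. indicator {y. \<bar>llr S \<mu> m p j y\<bar> \<le> t} y *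
       ((qfun S \<mu> m p j 1 y + qfun S \<mu> m p j (-1) y) / 2) \<partial>lborel)"

definition Psibar :: "'s set \<Rightarrow> (int list \<Rightarrow> 's) \<Rightarrow> nat \<Rightarrow> ('s \<Rightarrow> 'y::euclidean_space \<Rightarrow> real)
    \<Rightarrow> real \<Rightarrow> real" where
  "Psibar S \<mu> m p t = (1 / real m) * (\<Sum>j<m. Psi S \<mu> m p j t)"

definition smooth_on :: "real set \<Rightarrow> (real \<Rightarrow> real) \<Rightarrow> bool" where
  "smooth_on U f \<longleftrightarrow> (\<forall>k. \<forall>x\<in>U. ((deriv ^^ k) f) differentiable (at x))"

definition smooth_cdf :: "(real \<Rightarrow> real) \<Rightarrow> bool" where
  "smooth_cdf F \<longleftrightarrow> bij_betw F {0..} {0..<1} \<and> smooth_on {0<..} F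
      \<and> smooth_on {0<..<1} (inv_into {0..} F)"

definition sgnp :: "real \<Rightarrow> int" where
  "sgnp t = (if t \<ge> 0 then 1 else -1)"

text \<open>Rank of |T i j| among all m*N values (rank 1 = smallest); ties broken by
  lexicographic order of the index pair, so ranks form a permutation of 1..mN.\<close>
definition rnk :: "nat \<Rightarrow> nat \<Rightarrow> (nat \<Rightarrow> nat \<Rightarrow> real) \<Rightarrow> nat \<Rightarrow> nat \<Rightarrow> nat" where
  "rnk N m T i j = card {(i', j'). i' < N \<and> j' < m \<and>
      (\<bar>T i' j'\<bar> < \<bar>T i j\<bar> \<or> (\<bar>T i' j'\<bar> = \<bar>T i j\<bar> \<and> (i' < i \<or> (i' = i \<and> j' \<le> j))))}"

definition orb_metric :: "nat \<Rightarrow> nat \<Rightarrow> (nat \<Rightarrow> nat \<Rightarrow> real) \<Rightarrow> (nat \<Rightarrow> nat \<Rightarrow> int) \<Rightarrow> real" where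
  "orb_metric N m T Xw = (1 / (real m * real N)) *
     (\<Sum>i<N. \<Sum>j<m. (real (rnk N m T i j) / (real m * real N)) *
        (if sgnp (T i j) * Xw i j < 0 then 1 else 0))"

definition Tsigma :: "'a measure \<Rightarrow> nat \<Rightarrow> nat \<Rightarrow> (nat \<Rightarrow> 'a \<Rightarrow> 'y) \<Rightarrow> (nat \<Rightarrow> 'y \<Rightarrow> real)
    \<Rightarrow> 'a measure" where
  "Tsigma M N m Y L = sigma (space M)
     (\<Union>i\<in>{..<N}. \<Union>j\<in>{..<m}. {(\<lambda>x. L j (Y i x)) -` A \<inter> space M | A. A \<in> sets borel})"

definition csize :: "real \<Rightarrow> nat \<Rightarrow> nat" where
  "csize R N = nat \<lceil>exp (real N * R)\<rceil>"

end

(*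
  Conditionally on the channel outputs, the bits of a codeword w' other than the transmitted one
  are still independent and uniform: the joint law depends on the codebook only through
  codeword 1, so every bit pattern event of codeword w' is independent of every output
  rectangle, hence of the sigma algebra generated by the reliabilities T.  The conditional
  expectation of exp(N theta D(w')) is therefore the average of exp(N theta D) over all 2^(mN)
  sign patterns.  Since the ranks form a permutation of 1..mN and D is linear in the indicators
  of the flipped positions, this average factorises as
    2^(-mN) * prod_{r=1..mN} (1 + exp (theta/m * r/(mN))),
  a deterministic quantity; its normalised logarithm is m times a Riemann sum of the decreasing
  function t -> ln (1 + exp (theta t/m)) minus m ln 2, which converges to the stated limit.
*)
theory Submission
  imports Defs
begin

section \<open>Ranks and the ORBGRAND metric\<close>

lemma bij_betw_card_below:
  assumes fin: "finite K"
    and trans: "\<And>a b c. le a b \<Longrightarrow> le b c \<Longrightarrow> le a c"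
    and total: "\<And>a b. le a b \<or> le b a"
    and antisym: "\<And>a b. le a b \<Longrightarrow> le b a \<Longrightarrow> a = b"
  shows "bij_betw (\<lambda>k. card {k' \<in> K. le k' k}) K {1..card K}"
proof -
  let ?f = "\<lambda>k. card {k' \<in> K. le k' k}"
  have less: "?f a < ?f b" if "b \<in> K" "le a b" "a \<noteq> b" for a b
  proof -
    have "{k' \<in> K. le k' a} \<subset> {k' \<in> K. le k' b}"
      using that trans[of _ a b] antisym[of a b] total[of b b] by blast
    then show ?thesis using fin by (intro psubset_card_mono) auto
  qed
  have inj: "inj_on ?f K"
  proof (rule inj_onI, rule ccontr)
    fix a b assume ab: "a \<in> K" "b \<in> K" "?f a = ?f b" "a \<noteq> b"
    show False using total[of a b] less[of b a] less[of a b] ab by auto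
  qed
  have "?f ` K \<subseteq> {1..card K}"
  proof clarsimp
    fix k assume k: "k \<in> K"
    then have "k \<in> {k' \<in> K. le k' k}" using total[of k k] by blast
    then show "Suc 0 \<le> ?f k \<and> ?f k \<le> card K"
      using fin by (auto simp: Suc_le_eq card_gt_0_iff intro: card_mono)
  qed
  moreover have "card (?f ` K) = card {1..card K}" using inj by (simp add: card_image)
  ultimately have "?f ` K = {1..card K}" by (intro card_subset_eq) auto
  then show ?thesis using inj by (simp add: bij_betw_def)
qed

definition rank_le :: "(nat \<Rightarrow> nat \<Rightarrow> real) \<Rightarrow> nat \<times> nat \<Rightarrow> nat \<times> nat \<Rightarrow> bool" where
  "rank_le T k k' \<longleftrightarrow> \<bar>T (fst k) (snd k)\<bar> < \<bar>T (fst k') (snd k')\<bar> \<or>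
     (\<bar>T (fst k) (snd k)\<bar> = \<bar>T (fst k') (snd k')\<bar> \<and>
      (fst k < fst k' \<or> (fst k = fst k' \<and> snd k \<le> snd k')))"

lemma rank_le_trans: "rank_le T a b \<Longrightarrow> rank_le T b c \<Longrightarrow> rank_le T a c"
  unfolding rank_le_def by auto

lemma rank_le_total: "rank_le T a b \<or> rank_le T b a"
  unfolding rank_le_def by auto

lemma rank_le_antisym: "rank_le T a b \<Longrightarrow> rank_le T b a \<Longrightarrow> a = b"
  unfolding rank_le_def by (cases a; cases b) auto

lemma rnk_eq_card_rank_le: "rnk N m T i j = card {k \<in> {..<N} \<times> {..<m}. rank_le T k (i, j)}"
  unfolding rnk_def rank_le_def by (rule arg_cong[where f = card]) auto

lemma rnk_bij_betw:
  "bij_betw (\<lambda>k. rnk N m T (fst k) (snd k)) ({..<N} \<times> {..<m}) {1..m * N}"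
proof -
  have "bij_betw (\<lambda>k. card {k' \<in> {..<N} \<times> {..<m}. rank_le T k' k}) ({..<N} \<times> {..<m})
      {1..card ({..<N} \<times> {..<m})}"
    by (rule bij_betw_card_below[OF _ rank_le_trans rank_le_total rank_le_antisym]) auto
  then show ?thesis by (simp add: rnk_eq_card_rank_le card_cartesian_product mult.commute)
qed

lemma rnk_eq_sum_rank_le:
  "real (rnk N m T i j) = (\<Sum>k\<in>{..<N} \<times> {..<m}. if rank_le T k (i, j) then 1 else 0)"
  unfolding rnk_eq_card_rank_le by (simp add: sum.If_cases Int_def)

definition sign_patterns :: "nat \<Rightarrow> nat \<Rightarrow> (nat \<times> nat \<Rightarrow> int) set" where
  "sign_patterns N m = PiE ({..<N} \<times> {..<m}) (\<lambda>_. {-1, 1})"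

lemma finite_sign_patterns: "finite (sign_patterns N m)"
  unfolding sign_patterns_def by (auto intro: finite_PiE)

lemma card_sign_patterns: "card (sign_patterns N m) = 2 ^ (N * m)"
  unfolding sign_patterns_def by (simp add: card_PiE card_cartesian_product numeral_2_eq_2)

lemma orb_metric_eq_sum_pairs:
  "orb_metric N m T Z = (\<Sum>k\<in>{..<N} \<times> {..<m}.
      real (rnk N m T (fst k) (snd k)) / (real m * real N) ^ 2 *
      (if sgnp (T (fst k) (snd k)) * Z (fst k) (snd k) < 0 then 1 else 0))"
  unfolding orb_metric_def sum_distrib_left sum.cartesian_product
  by (simp add: case_prod_beta power2_eq_square)

lemma orb_metric_cong:
  assumes "\<And>i j. i < N \<Longrightarrow> j < m \<Longrightarrow> Z i j = Z' i j"
  shows "orb_metric N m T Z = orb_metric N m T Z'"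
  unfolding orb_metric_def using assms by (intro arg_cong2[where f = "(*)"] refl sum.cong) auto

lemma orb_metric_nonneg: "0 \<le> orb_metric N m T Z"
  unfolding orb_metric_def by (intro mult_nonneg_nonneg sum_nonneg) auto

lemma sgnp_mult_neg_iff:
  "sgnp t * z < 0 \<longleftrightarrow> (0 \<le> t \<and> real_of_int z < 0) \<or> (t < 0 \<and> 0 < real_of_int z)"
  unfolding sgnp_def by auto

lemma borel_measurable_orb_metric:
  fixes T :: "nat \<Rightarrow> nat \<Rightarrow> 'a \<Rightarrow> real" and Z :: "nat \<Rightarrow> nat \<Rightarrow> 'a \<Rightarrow> int"
  assumes T: "\<And>i j. i < N \<Longrightarrow> j < m \<Longrightarrow> T i j \<in> borel_measurable M"
    and Z: "\<And>i j. i < N \<Longrightarrow> j < m \<Longrightarrow> (\<lambda>x. real_of_int (Z i j x)) \<in> borel_measurable M"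
  shows "(\<lambda>x. orb_metric N m (\<lambda>i j. T i j x) (\<lambda>i j. Z i j x)) \<in> borel_measurable M"
  unfolding orb_metric_eq_sum_pairs rnk_eq_sum_rank_le
proof (intro borel_measurable_sum)
  fix k assume k: "k \<in> {..<N} \<times> {..<m}"
  have [measurable]: "T (fst k) (snd k) \<in> borel_measurable M"
    "(\<lambda>x. real_of_int (Z (fst k) (snd k) x)) \<in> borel_measurable M"
    using k T Z by auto
  have "(\<lambda>x. \<Sum>k'\<in>{..<N} \<times> {..<m}. if rank_le (\<lambda>i j. T i j x) k' k then 1 else 0 :: real)
      \<in> borel_measurable M"
  proof (intro borel_measurable_sum)
    fix k' assume "k' \<in> {..<N} \<times> {..<m}"
    then have [measurable]: "T (fst k') (snd k') \<in> borel_measurable M" using T by auto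
    show "(\<lambda>x. if rank_le (\<lambda>i j. T i j x) k' k then 1 else 0 :: real) \<in> borel_measurable M"
      unfolding rank_le_def by measurable
  qed
  then show "(\<lambda>x. (\<Sum>k'\<in>{..<N} \<times> {..<m}. if rank_le (\<lambda>i j. T i j x) k' (fst k, snd k) then 1 else 0)
      / (real m * real N)\<^sup>2 * (if sgnp (T (fst k) (snd k) x) * Z (fst k) (snd k) x < 0 then 1 else 0))
    \<in> borel_measurable M"
    unfolding sgnp_mult_neg_iff prod.collapse by measurable
qed

lemma sum_exp_orb_metric_sign_patterns:
  "(\<Sum>z\<in>sign_patterns N m. exp (real N * \<theta> * orb_metric N m T (\<lambda>i j. z (i, j))))
     = (\<Prod>r\<in>{1..m * N}. 1 + exp (\<theta> / real m * (real r / real (m * N))))"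
proof -
  let ?K = "{..<N} \<times> {..<m}"
  define a where "a k = \<theta> / real m * (real (rnk N m T (fst k) (snd k)) / real (m * N))" for k
  define F where "F k v = (if sgnp (T (fst k) (snd k)) * v < 0 then exp (a k) else 1)" for k v
  have "exp (real N * \<theta> * orb_metric N m T (\<lambda>i j. z (i, j))) = (\<Prod>k\<in>?K. F k (z k))" for z
  proof -
    have "real N * \<theta> * orb_metric N m T (\<lambda>i j. z (i, j)) =
        (\<Sum>k\<in>?K. a k * (if sgnp (T (fst k) (snd k)) * z k < 0 then 1 else 0))"
      unfolding orb_metric_eq_sum_pairs sum_distrib_left
      by (intro sum.cong refl) (auto simp: a_def power2_eq_square)
    then show ?thesis by (simp add: exp_sum F_def if_distrib cong: if_cong)
  qed
  then have "(\<Sum>z\<in>sign_patterns N m. exp (real N * \<theta> * orb_metric N m T (\<lambda>i j. z (i, j))))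
      = (\<Sum>z\<in>PiE ?K (\<lambda>_. {-1, 1}). \<Prod>k\<in>?K. F k (z k))"
    by (simp add: sign_patterns_def)
  also have "\<dots> = (\<Prod>k\<in>?K. \<Sum>v\<in>{-1, 1}. F k v)"
    by (rule prod_sum_PiE[symmetric]) auto
  also have "\<dots> = (\<Prod>k\<in>?K. 1 + exp (a k))"
    by (intro prod.cong refl) (auto simp: F_def sgnp_def)
  also have "\<dots> = (\<Prod>r\<in>{1..m * N}. 1 + exp (\<theta> / real m * (real r / real (m * N))))"
    unfolding a_def by (rule prod.reindex_bij_betw[OF rnk_bij_betw])
  finally show ?thesis .
qed

section \<open>Riemann sums of monotone functions\<close>

lemma integral_uniform_partition:
  fixes h :: "real \<Rightarrow> real"
  assumes cont: "continuous_on {0..1} h" and "k \<le> n"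
  shows "integral {0..real k / real n} h = (\<Sum>r<k. integral {real r / real n..real (Suc r) / real n} h)"
  using \<open>k \<le> n\<close>
proof (induction k)
  case (Suc k)
  have "integral {0..real k / real n} h + integral {real k / real n..real (Suc k) / real n} h
      = integral {0..real (Suc k) / real n} h"
    using Suc.prems
    by (intro Henstock_Kurzweil_Integration.integral_combine integrable_continuous_interval
        continuous_on_subset[OF cont]) (auto simp: divide_right_mono)
  then show ?case using Suc by simp
qed simp

lemma riemann_sum_antimono_bound:
  fixes h :: "real \<Rightarrow> real"
  assumes cont: "continuous_on {0..1} h"
    and antimono: "\<And>x y. 0 \<le> x \<Longrightarrow> x \<le> y \<Longrightarrow> y \<le> 1 \<Longrightarrow> h y \<le> h x"
    and n: "n > 0"
  shows "\<bar>(\<Sum>r\<in>{1..n}. h (real r / real n)) / real n - integral {0..1} h\<bar> \<le> (h 0 - h 1) / real n"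
proof -
  define I where "I r = integral {real r / real n..real (Suc r) / real n} h" for r
  define lower where "lower = (\<Sum>r<n. h (real (Suc r) / real n))"
  define upper where "upper = (\<Sum>r<n. h (real r / real n))"
  have cell: "h (real (Suc r) / real n) / real n \<le> I r \<and> I r \<le> h (real r / real n) / real n"
    if "r < n" for r
  proof -
    let ?a = "real r / real n" and ?b = "real (Suc r) / real n"
    have ab: "0 \<le> ?a" "?a \<le> ?b" "?b \<le> 1" using n that by (auto simp: divide_right_mono)
    have int: "h integrable_on {?a..?b}"
      using ab by (intro integrable_continuous_interval continuous_on_subset[OF cont]) auto
    have "Henstock_Kurzweil_Integration.content {?a..?b} = 1 / real n" using ab n by (simp add: field_simps)
    moreover have "h ?b \<le> h x" "h x \<le> h ?a" if "x \<in> {?a..?b}" for x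
      using that ab antimono[of x ?b] antimono[of ?a x] order_trans[OF ab(1)] by auto
    then have "integral {?a..?b} (\<lambda>_. h ?b) \<le> I r" "I r \<le> integral {?a..?b} (\<lambda>_. h ?a)"
      unfolding I_def by (intro integral_le int integrable_continuous_interval continuous_intros; simp)+
    ultimately show ?thesis by simp
  qed
  have "integral {0..1} h = (\<Sum>r<n. I r)"
    using integral_uniform_partition[OF cont, of n n] n by (simp add: I_def)
  moreover have "lower / real n \<le> (\<Sum>r<n. I r)" "(\<Sum>r<n. I r) \<le> upper / real n"
    unfolding lower_def upper_def sum_divide_distrib using cell by (auto intro: sum_mono)
  moreover have "upper / real n - lower / real n = (h 0 - h 1) / real n"
    unfolding lower_def upper_def diff_divide_distrib[symmetric]
    using sum_lessThan_telescope[of "\<lambda>r. h (real r / real n)" n] n by (simp add: sum_subtractf)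
  moreover have "(\<Sum>r\<in>{1..n}. h (real r / real n)) = lower"
    by (simp add: lower_def sum.atLeast1_atMost_eq)
  ultimately show ?thesis by (simp add: abs_le_iff)
qed

lemma riemann_sum_antimono_tendsto:
  fixes h :: "real \<Rightarrow> real"
  assumes cont: "continuous_on {0..1} h"
    and antimono: "\<And>x y. 0 \<le> x \<Longrightarrow> x \<le> y \<Longrightarrow> y \<le> 1 \<Longrightarrow> h y \<le> h x"
  shows "(\<lambda>n. (\<Sum>r\<in>{1..n}. h (real r / real n)) / real n) \<longlonglongrightarrow> integral {0..1} h"
proof -
  let ?err = "\<lambda>n. (\<Sum>r\<in>{1..n}. h (real r / real n)) / real n - integral {0..1} h"
  have "eventually (\<lambda>n. norm (?err n) \<le> (h 0 - h 1) / real n) sequentially"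
    using eventually_gt_at_top[of 0]
  proof eventually_elim
    case (elim n)
    then show ?case using riemann_sum_antimono_bound[OF cont antimono elim] by simp
  qed
  then have "?err \<longlonglongrightarrow> 0" by (rule Lim_null_comparison) (rule lim_const_over_n)
  then show ?thesis by (simp add: LIM_zero_iff)
qed

definition orb_cond_mgf :: "nat \<Rightarrow> nat \<Rightarrow> real \<Rightarrow> real" where
  "orb_cond_mgf N m \<theta> = (1/2) ^ (N * m) * (\<Prod>r\<in>{1..m * N}. 1 + exp (\<theta> / real m * (real r / real (m * N))))"

lemma ln_orb_cond_mgf:
  assumes "N > 0" "m > 0"
  shows "ln (orb_cond_mgf N m \<theta>) / real N
    = real m * ((\<Sum>r\<in>{1..m * N}. ln (1 + exp (\<theta> / real m * (real r / real (m * N))))) / real (m * N))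
      - real m * ln 2"
proof -
  have one_plus_exp_pos: "0 < 1 + exp x" for x :: real
    using exp_gt_zero[of x] by linarith
  have "ln (orb_cond_mgf N m \<theta>)
      = real (N * m) * ln (1/2) + (\<Sum>r\<in>{1..m * N}. ln (1 + exp (\<theta> / real m * (real r / real (m * N)))))"
    unfolding orb_cond_mgf_def using one_plus_exp_pos
    by (simp add: ln_mult prod_pos ln_prod ln_realpow less_imp_neq[symmetric] del: of_nat_mult)
  then show ?thesis using assms by (simp add: ln_div field_simps)
qed

lemma ln_orb_cond_mgf_tendsto:
  assumes m: "m > 0" and \<theta>: "\<theta> \<le> 0"
  shows "(\<lambda>N. ln (orb_cond_mgf N m \<theta>) / real N)
    \<longlonglongrightarrow> real m * integral {0..1} (\<lambda>t. ln (1 + exp (\<theta> / real m * t))) - real m * ln 2"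
proof -
  define h where "h t = ln (1 + exp (\<theta> / real m * t))" for t
  have cont: "continuous_on {0..1} h"
    unfolding h_def using exp_gt_zero by (intro continuous_intros) (smt (verit))
  have antimono: "h y \<le> h x" if "x \<le> y" for x y
  proof -
    have "\<theta> / real m * y \<le> \<theta> / real m * x"
      using that \<theta> m by (intro mult_left_mono_neg) (auto simp: divide_nonpos_pos)
    then show ?thesis unfolding h_def by (simp add: add_pos_pos)
  qed
  have "strict_mono (\<lambda>N. m * N)" using m by (simp add: strict_mono_def)
  from LIMSEQ_subseq_LIMSEQ[OF riemann_sum_antimono_tendsto[OF cont antimono] this]
  have "(\<lambda>N. (\<Sum>r\<in>{1..m * N}. h (real r / real (m * N))) / real (m * N)) \<longlonglongrightarrow> integral {0..1} h"
    by (simp add: comp_def)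
  then have "(\<lambda>N. real m * ((\<Sum>r\<in>{1..m * N}. h (real r / real (m * N))) / real (m * N)) - real m * ln 2)
      \<longlonglongrightarrow> real m * integral {0..1} h - real m * ln 2"
    by (intro tendsto_intros)
  then show ?thesis
    unfolding h_def
    by (rule Lim_transform_eventually)
       (use eventually_gt_at_top[of 0] in \<open>eventually_elim, simp add: ln_orb_cond_mgf[OF _ m]\<close>)
qed

section \<open>Conditional expectation along an independent partition\<close>

lemma (in prob_space) integral_mult_indicator_indep_generator:
  assumes E: "Int_stable E" "E \<subseteq> sets M" "space M \<in> E"
    and A: "A \<in> sets M"
    and indep: "\<And>R. R \<in> E \<Longrightarrow> prob (A \<inter> R) = q * prob R"
    and h: "h \<in> borel_measurable (sigma (space M) E)" "\<And>x. 0 \<le> h x"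
  shows "(\<integral>x. h x * indicator A x \<partial>M) = q * (\<integral>x. h x \<partial>M)"
proof -
  let ?G = "sigma (space M) E"
  have E_Pow: "E \<subseteq> Pow (space M)" using E(2) sets.sets_into_space by blast
  have sets_G: "sets ?G = sigma_sets (space M) E" using E_Pow by (rule sets_measure_of)
  have sub: "subalgebra (density M g) ?G" for g
    unfolding subalgebra_def using E_Pow E(2)
    by (simp add: sets_G space_measure_of_conv sets.sigma_sets_subset)
  have sub_M: "subalgebra M ?G"
    unfolding subalgebra_def using E_Pow E(2)
    by (simp add: sets_G space_measure_of_conv sets.sigma_sets_subset)
  have "q = prob A" using indep[OF E(3)] A by (simp add: Int_absorb2 sets.sets_into_space prob_space)
  then have q: "0 \<le> q" by simp
  \<comment> \<open>The measures \<open>prob (A \<inter> _)\<close> and \<open>q * prob _\<close> agree on the generator, hence on \<open>sigma E\<close>.\<close>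
  have em_density: "emeasure (restr_to_subalg (density M (indicator A)) ?G) R = ennreal (q * prob R)"
    "emeasure (restr_to_subalg (density M (\<lambda>_. ennreal q)) ?G) R = ennreal (q * prob R)"
    if "R \<in> E" for R
  proof -
    have R: "R \<in> sets M" "R \<in> sets ?G" using that E(2) sets_G by auto
    have "emeasure (density M (indicator A)) R = emeasure M (A \<inter> R)"
      using A R by (simp add: emeasure_density indicator_inter_arith[symmetric] nn_integral_indicator
        flip: times_ennreal_def)
    then show "emeasure (restr_to_subalg (density M (indicator A)) ?G) R = ennreal (q * prob R)"
      using indep[OF that] A R by (simp add: emeasure_restr_to_subalg[OF sub] emeasure_eq_measure)
    show "emeasure (restr_to_subalg (density M (\<lambda>_. ennreal q)) ?G) R = ennreal (q * prob R)"
      using R q by (simp add: emeasure_restr_to_subalg[OF sub] emeasure_density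
        nn_integral_cmult_indicator emeasure_eq_measure ennreal_mult)
  qed
  have restr_eq: "restr_to_subalg (density M (indicator A)) ?G = restr_to_subalg (density M (\<lambda>_. ennreal q)) ?G"
    by (rule measure_eqI_generator_eq[OF E(1) E_Pow, where A = "\<lambda>_. space M"])
       (use E(3) em_density sets_restr_to_subalg[OF sub] sets_G in auto)
  have hG[measurable]: "h \<in> borel_measurable ?G" by (rule h)
  have hM[measurable]: "h \<in> borel_measurable M" by (rule measurable_from_subalg[OF sub_M h(1)])
  have "(\<integral>\<^sup>+ x. ennreal (h x * indicator A x) \<partial>M) = (\<integral>\<^sup>+ x. ennreal (h x) \<partial>density M (indicator A))"
    using A by (simp add: nn_integral_density) (auto intro!: nn_integral_cong split: split_indicator)
  also have "\<dots> = (\<integral>\<^sup>+ x. ennreal (h x) \<partial>restr_to_subalg (density M (indicator A)) ?G)"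
    by (simp add: nn_integral_subalgebra2[OF sub])
  also have "\<dots> = (\<integral>\<^sup>+ x. ennreal (h x) \<partial>density M (\<lambda>_. ennreal q))"
    unfolding restr_eq by (simp add: nn_integral_subalgebra2[OF sub])
  also have "\<dots> = ennreal q * (\<integral>\<^sup>+ x. ennreal (h x) \<partial>M)"
    by (simp add: nn_integral_density nn_integral_cmult)
  finally have "(\<integral>\<^sup>+ x. ennreal (h x * indicator A x) \<partial>M) = ennreal q * (\<integral>\<^sup>+ x. ennreal (h x) \<partial>M)" .
  then show ?thesis
    using A h(2) q by (simp add: integral_eq_nn_integral enn2real_mult)
qed

lemma (in prob_space) real_cond_exp_indep_partition:
  fixes E :: "'i \<Rightarrow> 'a set" and \<phi> :: "'i \<Rightarrow> 'a \<Rightarrow> real"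
  assumes F: "subalgebra M F"
    and Z: "finite Z" "\<And>z. z \<in> Z \<Longrightarrow> E z \<in> sets M" "disjoint_family_on E Z"
      "AE x in M. x \<in> (\<Union>z\<in>Z. E z)"
    and indep: "\<And>z h. z \<in> Z \<Longrightarrow> h \<in> borel_measurable F \<Longrightarrow> (\<And>x. 0 \<le> h x) \<Longrightarrow>
      (\<integral>x. h x * indicator (E z) x \<partial>M) = q * (\<integral>x. h x \<partial>M)"
    and \<phi>: "\<And>z. z \<in> Z \<Longrightarrow> \<phi> z \<in> borel_measurable F"
      "\<And>z x. z \<in> Z \<Longrightarrow> 0 \<le> \<phi> z x" "\<And>z x. z \<in> Z \<Longrightarrow> \<phi> z x \<le> B"
    and f: "f \<in> borel_measurable M" "\<And>z x. z \<in> Z \<Longrightarrow> x \<in> E z \<Longrightarrow> f x = \<phi> z x"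
  shows "AE x in M. real_cond_exp M F f x = q * (\<Sum>z\<in>Z. \<phi> z x)"
proof -
  interpret sigma_finite_subalgebra M F
    by (rule finite_measure_subalgebra_is_sigma_finite)
       (simp add: finite_measure_subalgebra_def finite_measure_subalgebra_axioms_def F finite_measure_axioms)
  have \<phi>M: "\<phi> z \<in> borel_measurable M" if "z \<in> Z" for z
    by (rule measurable_from_subalg[OF F \<phi>(1)[OF that]])
  have f_sum: "AE x in M. f x = (\<Sum>z\<in>Z. \<phi> z x * indicator (E z) x)"
    using Z(4)
  proof eventually_elim
    case (elim x)
    then obtain z0 where z0: "z0 \<in> Z" "x \<in> E z0" by blast
    have "x \<notin> E z" if "z \<in> Z" "z \<noteq> z0" for z
      using Z(3) z0 that by (auto simp: disjoint_family_on_def)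
    then have "(\<Sum>z\<in>Z. \<phi> z x * indicator (E z) x) = (\<Sum>z\<in>Z. if z = z0 then \<phi> z x else 0)"
      using z0 by (intro sum.cong) auto
    also have "\<dots> = \<phi> z0 x" using z0 Z(1) by simp
    finally show ?case using f(2) z0 by simp
  qed
  have f_int: "integrable M f"
  proof (rule integrable_const_bound[where B = B])
    show "AE x in M. norm (f x) \<le> B"
      using Z(4) by eventually_elim (use f(2) \<phi>(2,3) in force)
  qed (rule f(1))
  have \<phi>_int: "integrable M (\<phi> z)" if "z \<in> Z" for z
    by (rule integrable_const_bound[where B = B]) (use \<phi>(2,3) \<phi>M that in auto)
  have "(\<integral>x\<in>A. f x \<partial>M) = (\<integral>x\<in>A. q * (\<Sum>z\<in>Z. \<phi> z x) \<partial>M)" if A: "A \<in> sets F" for A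
  proof -
    have AM: "A \<in> sets M" using A F by (auto simp: subalgebra_def)
    have A_int: "integrable M (\<lambda>x. indicator A x * \<phi> z x)" if "z \<in> Z" for z
      using integrable_real_mult_indicator[OF AM \<phi>_int[OF that]] by (simp add: mult.commute)
    have "(\<integral>x\<in>A. f x \<partial>M) = (\<integral>x. (\<Sum>z\<in>Z. indicator A x * \<phi> z x * indicator (E z) x) \<partial>M)"
      unfolding set_lebesgue_integral_def
      by (rule integral_cong_AE) (use f_sum AM f(1) \<phi>M Z(2) in \<open>auto simp: sum_distrib_left mult.assoc\<close>)
    also have "\<dots> = (\<Sum>z\<in>Z. \<integral>x. indicator A x * \<phi> z x * indicator (E z) x \<partial>M)"
      by (intro Bochner_Integration.integral_sum integrable_real_mult_indicator A_int Z(2))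
    also have "\<dots> = (\<Sum>z\<in>Z. \<integral>x. q * (indicator A x * \<phi> z x) \<partial>M)"
      using A \<phi> by (simp add: indep)
    also have "\<dots> = (\<integral>x. (\<Sum>z\<in>Z. q * (indicator A x * \<phi> z x)) \<partial>M)"
      by (rule Bochner_Integration.integral_sum[symmetric]) (use A_int in auto)
    also have "\<dots> = (\<integral>x\<in>A. q * (\<Sum>z\<in>Z. \<phi> z x) \<partial>M)"
      unfolding set_lebesgue_integral_def by (simp add: sum_distrib_left mult_ac)
    finally show ?thesis .
  qed
  moreover have "integrable M (\<lambda>x. q * (\<Sum>z\<in>Z. \<phi> z x))"
    using \<phi>_int by auto
  ultimately show ?thesis
    by (intro real_cond_exp_charact f_int) (use \<phi>(1) in auto)
qed

lemma AE_eventually_sequentially: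
  assumes "eventually (\<lambda>n. AE x in M. P n x) sequentially"
  shows "AE x in M. eventually (\<lambda>n. P n x) sequentially"
proof -
  obtain n0 where "\<And>n. n \<ge> n0 \<Longrightarrow> AE x in M. P n x"
    using assms by (auto simp: eventually_sequentially)
  then have "AE x in M. \<forall>n. n \<ge> n0 \<longrightarrow> P n x"
    by (auto simp: AE_all_countable)
  then show ?thesis
    by eventually_elim (auto simp: eventually_sequentially)
qed

section \<open>Random codebooks\<close>

lemma sum_sign_fiber_eq:
  fixes g :: "('k \<Rightarrow> int) \<Rightarrow> 'b::comm_monoid_add"
  assumes K: "K \<subseteq> D" and z: "\<forall>k\<in>K. z1 k \<in> {-1, 1}" "\<forall>k\<in>K. z2 k \<in> {-1, 1}"
    and g: "\<And>\<beta> \<beta>'. (\<And>k. k \<notin> K \<Longrightarrow> \<beta> k = \<beta>' k) \<Longrightarrow> g \<beta> = g \<beta>'"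
  shows "(\<Sum>\<beta>\<in>{\<beta> \<in> D \<rightarrow>\<^sub>E {-1, 1}. \<forall>k\<in>K. \<beta> k = z1 k}. g \<beta>)
       = (\<Sum>\<beta>\<in>{\<beta> \<in> D \<rightarrow>\<^sub>E {-1, 1}. \<forall>k\<in>K. \<beta> k = z2 k}. g \<beta>)"
proof -
  define fiber where "fiber z = {\<beta> \<in> D \<rightarrow>\<^sub>E {-1::int, 1}. \<forall>k\<in>K. \<beta> k = z k}" for z
  \<comment> \<open>Multiplying the coordinates in \<open>K\<close> by \<open>z1 k * z2 k\<close> is an involution exchanging the fibres.\<close>
  define s where "s k = z1 k * z2 k" for k
  define flip where "flip \<beta> k = (if k \<in> K then \<beta> k * s k else \<beta> k)" for \<beta> k
  have sign: "s k \<in> {-1, 1}" "s k * s k = 1" "z1 k * s k = z2 k" "z2 k * s k = z1 k" if "k \<in> K" for k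
    using z[THEN bspec, OF that] by (auto simp: s_def)
  have flip_flip: "flip (flip \<beta>) = \<beta>" for \<beta>
    unfolding flip_def fun_eq_iff by (simp add: mult.assoc sign(2))
  have flip_fiber: "flip \<beta> \<in> fiber z'" if "\<beta> \<in> fiber z" "z = z1 \<and> z' = z2 \<or> z = z2 \<and> z' = z1"
    for \<beta> z z'
  proof -
    have "flip \<beta> k \<in> {-1, 1}" if "k \<in> D" for k
    proof -
      have "\<beta> k \<in> {-1, 1}" using \<open>\<beta> \<in> fiber z\<close> that by (auto simp: fiber_def PiE_iff)
      then show ?thesis using sign(1)[of k] by (auto simp: flip_def)
    qed
    moreover have "flip \<beta> k = undefined" if "k \<notin> D" for k
      using \<open>\<beta> \<in> fiber z\<close> that K by (auto simp: fiber_def flip_def PiE_def extensional_def)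
    moreover have "flip \<beta> k = z' k" if "k \<in> K" for k
      using \<open>\<beta> \<in> fiber z\<close> that sign(3,4)[of k] \<open>z = z1 \<and> z' = z2 \<or> z = z2 \<and> z' = z1\<close>
      by (auto simp: fiber_def flip_def)
    ultimately show ?thesis unfolding fiber_def PiE_def extensional_def by blast
  qed
  have "bij_betw flip (fiber z1) (fiber z2)"
    by (rule bij_betw_byWitness[where f' = flip]) (use flip_fiber flip_flip in blast)+
  then have "(\<Sum>\<beta>\<in>fiber z1. g (flip \<beta>)) = (\<Sum>\<beta>\<in>fiber z2. g \<beta>)"
    by (rule sum.reindex_bij_betw)
  moreover have "g (flip \<beta>) = g \<beta>" for \<beta>
    by (rule g) (simp add: flip_def)
  ultimately show ?thesis by (simp add: fiber_def)
qed

text \<open>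
  \<open>X w i j\<close> is bit \<open>j\<close> of symbol \<open>i\<close> of codeword \<open>w\<close>, and \<open>Y i\<close> is the \<open>i\<close>-th channel output.
  The hypothesis \<open>law\<close> says that all \<open>C\<close> codewords are independent and uniform and that the
  outputs depend on the codebook only through the transmitted codeword 1, with conditional
  law \<open>G\<close>.
\<close>
locale random_codebook = prob_space M
  for M :: "'a measure" +
  fixes C N m :: nat
    and X :: "nat \<Rightarrow> nat \<Rightarrow> nat \<Rightarrow> 'a \<Rightarrow> int"
    and Y :: "nat \<Rightarrow> 'a \<Rightarrow> 'y::euclidean_space"
    and G :: "(nat \<Rightarrow> nat \<Rightarrow> int) \<Rightarrow> (nat \<Rightarrow> 'y set) \<Rightarrow> ennreal"
  assumes X_measurable[measurable]: "\<And>w i j. X w i j \<in> measurable M (count_space UNIV)"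
    and Y_measurable[measurable]: "\<And>i. Y i \<in> borel_measurable M"
    and law: "\<And>b B. (\<forall>w\<in>{1..C}. \<forall>i<N. \<forall>j<m. b w i j \<in> {-1, 1}) \<Longrightarrow> (\<forall>i<N. B i \<in> sets lborel) \<Longrightarrow>
      emeasure M {x \<in> space M. (\<forall>w\<in>{1..C}. \<forall>i<N. \<forall>j<m. X w i j x = b w i j) \<and> (\<forall>i<N. Y i x \<in> B i)}
      = ennreal ((1/2) ^ (C * N * m)) * G (b 1) B"
    and G_UNIV: "\<And>b. (\<forall>i<N. \<forall>j<m. b i j \<in> {-1, 1}) \<Longrightarrow> G b (\<lambda>_. UNIV) = 1"
begin

definition entries :: "(nat \<times> nat \<times> nat) set" where
  "entries = {1..C} \<times> {..<N} \<times> {..<m}"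

definition codebooks :: "(nat \<times> nat \<times> nat \<Rightarrow> int) set" where
  "codebooks = entries \<rightarrow>\<^sub>E {-1, 1}"

definition codebook_event :: "(nat \<times> nat \<times> nat \<Rightarrow> int) \<Rightarrow> (nat \<Rightarrow> 'y set) \<Rightarrow> 'a set" where
  "codebook_event \<beta> B = {x \<in> space M.
     (\<forall>w\<in>{1..C}. \<forall>i<N. \<forall>j<m. X w i j x = \<beta> (w, i, j)) \<and> (\<forall>i<N. Y i x \<in> B i)}"

definition output_event :: "(nat \<Rightarrow> 'y set) \<Rightarrow> 'a set" where
  "output_event B = {x \<in> space M. \<forall>i<N. Y i x \<in> B i}"

definition word_event :: "nat \<Rightarrow> (nat \<times> nat \<Rightarrow> int) \<Rightarrow> 'a set" where
  "word_event w z = {x \<in> space M. \<forall>i<N. \<forall>j<m. X w i j x = z (i, j)}"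

lemma sets_codebook_event: "(\<forall>i<N. B i \<in> sets lborel) \<Longrightarrow> codebook_event \<beta> B \<in> events"
  unfolding codebook_event_def by measurable auto

lemma sets_output_event: "(\<forall>i<N. B i \<in> sets lborel) \<Longrightarrow> output_event B \<in> events"
  unfolding output_event_def by measurable auto

lemma sets_word_event: "word_event w z \<in> events"
  unfolding word_event_def by measurable

lemma finite_codebooks: "finite codebooks"
  unfolding codebooks_def entries_def by (auto intro: finite_PiE)

lemma card_codebooks: "card codebooks = 2 ^ (C * N * m)"
  unfolding codebooks_def entries_def
  by (simp add: card_PiE card_cartesian_product numeral_2_eq_2 mult.assoc)

lemma codebook_event_disjoint: "disjoint_family_on (\<lambda>\<beta>. codebook_event \<beta> B) codebooks"
  unfolding disjoint_family_on_def
proof (intro ballI impI)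
  fix \<beta> \<beta>' assume "\<beta> \<in> codebooks" "\<beta>' \<in> codebooks" "\<beta> \<noteq> \<beta>'"
  then obtain k where "k \<in> entries" "\<beta> k \<noteq> \<beta>' k"
    unfolding codebooks_def by (metis PiE_ext)
  then show "codebook_event \<beta> B \<inter> codebook_event \<beta>' B = {}"
    unfolding codebook_event_def entries_def by force
qed

lemma emeasure_codebook_event:
  assumes "\<beta> \<in> codebooks" "\<forall>i<N. B i \<in> sets lborel"
  shows "emeasure M (codebook_event \<beta> B) = ennreal ((1/2) ^ (C * N * m)) * G (\<lambda>i j. \<beta> (1, i, j)) B"
  unfolding codebook_event_def
  by (rule law[of "\<lambda>w i j. \<beta> (w, i, j)"]) (use assms in \<open>auto simp: codebooks_def entries_def\<close>)

lemma AE_codebook_bits: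
  assumes "1 \<le> C"
  shows "AE x in M. \<forall>w\<in>{1..C}. \<forall>i<N. \<forall>j<m. X w i j x \<in> {-1, 1}"
proof -
  let ?Good = "{x \<in> space M. \<forall>w\<in>{1..C}. \<forall>i<N. \<forall>j<m. X w i j x \<in> {-1, 1}}"
  have Good_eq: "?Good = (\<Union>\<beta>\<in>codebooks. codebook_event \<beta> (\<lambda>_. UNIV))"
  proof (intro equalityI subsetI)
    fix x assume x: "x \<in> ?Good"
    then have "restrict (\<lambda>(w, i, j). X w i j x) entries \<in> codebooks"
      by (auto simp: codebooks_def entries_def)
    moreover have "x \<in> codebook_event (restrict (\<lambda>(w, i, j). X w i j x) entries) (\<lambda>_. UNIV)"
      using x by (auto simp: codebook_event_def entries_def)
    ultimately show "x \<in> (\<Union>\<beta>\<in>codebooks. codebook_event \<beta> (\<lambda>_. UNIV))" by blast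
  qed (auto simp: codebook_event_def codebooks_def entries_def PiE_iff)
  have "emeasure M ?Good = (\<Sum>\<beta>\<in>codebooks. emeasure M (codebook_event \<beta> (\<lambda>_. UNIV)))"
    unfolding Good_eq
    by (rule sum_emeasure[symmetric]) (use sets_codebook_event finite_codebooks codebook_event_disjoint in auto)
  also have "\<dots> = (\<Sum>\<beta>\<in>codebooks. ennreal ((1/2) ^ (C * N * m)))"
    using assms by (intro sum.cong refl)
      (auto simp: emeasure_codebook_event G_UNIV codebooks_def entries_def PiE_iff)
  also have "\<dots> = 1"
    by (simp add: card_codebooks ennreal_of_nat_eq_real_of_nat power_one_over flip: ennreal_mult)
  finally have "AE x in M. x \<in> ?Good"
    by (intro AE_prob_1) (simp add: emeasure_eq_measure)
  then show ?thesis by auto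
qed

lemma emeasure_Int_output_event:
  assumes "1 \<le> C" "A \<in> events" "\<forall>i<N. B i \<in> sets lborel"
  shows "emeasure M (A \<inter> output_event B) = (\<Sum>\<beta>\<in>codebooks. emeasure M (A \<inter> codebook_event \<beta> B))"
proof -
  have "AE x in M. x \<in> A \<inter> output_event B \<longleftrightarrow> x \<in> (\<Union>\<beta>\<in>codebooks. A \<inter> codebook_event \<beta> B)"
    using AE_codebook_bits[OF assms(1)]
  proof eventually_elim
    case (elim x)
    let ?\<beta> = "restrict (\<lambda>(w, i, j). X w i j x) entries"
    have "?\<beta> \<in> codebooks" using elim by (auto simp: codebooks_def entries_def)
    moreover have "x \<in> output_event B \<Longrightarrow> x \<in> codebook_event ?\<beta> B"
      by (auto simp: output_event_def codebook_event_def entries_def)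
    moreover have "codebook_event \<beta> B \<subseteq> output_event B" for \<beta>
      by (auto simp: output_event_def codebook_event_def)
    ultimately show ?case by blast
  qed
  moreover have "(\<Union>\<beta>\<in>codebooks. A \<inter> codebook_event \<beta> B) \<in> events"
    using assms finite_codebooks sets_codebook_event by (intro sets.finite_UN sets.Int) auto
  ultimately have "emeasure M (A \<inter> output_event B) = emeasure M (\<Union>\<beta>\<in>codebooks. A \<inter> codebook_event \<beta> B)"
    using assms sets_output_event by (intro emeasure_eq_AE) auto
  also have "\<dots> = (\<Sum>\<beta>\<in>codebooks. emeasure M (A \<inter> codebook_event \<beta> B))"
  proof (intro sum_emeasure[symmetric])
    show "disjoint_family_on (\<lambda>\<beta>. A \<inter> codebook_event \<beta> B) codebooks"
      using codebook_event_disjoint[of B] unfolding disjoint_family_on_def by blast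
  qed (use assms finite_codebooks sets_codebook_event in auto)
  finally show ?thesis .
qed

lemma emeasure_word_output_event:
  assumes "w \<in> {1..C}" "\<forall>i<N. B i \<in> sets lborel"
  shows "emeasure M (word_event w z \<inter> output_event B) =
    (\<Sum>\<beta>\<in>{\<beta> \<in> entries \<rightarrow>\<^sub>E {-1, 1}. \<forall>k\<in>{w} \<times> {..<N} \<times> {..<m}. \<beta> k = z (snd k)}.
      ennreal ((1/2) ^ (C * N * m)) * G (\<lambda>i j. \<beta> (1, i, j)) B)"
proof -
  have Int_eq: "word_event w z \<inter> codebook_event \<beta> B =
      (if \<forall>k\<in>{w} \<times> {..<N} \<times> {..<m}. \<beta> k = z (snd k) then codebook_event \<beta> B else {})" for \<beta>
    using assms(1) by (auto simp: word_event_def codebook_event_def)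
  have "emeasure M (word_event w z \<inter> output_event B)
      = (\<Sum>\<beta>\<in>codebooks. emeasure M (word_event w z \<inter> codebook_event \<beta> B))"
    by (rule emeasure_Int_output_event) (use assms sets_word_event in auto)
  also have "\<dots> = (\<Sum>\<beta>\<in>codebooks.
      if \<forall>k\<in>{w} \<times> {..<N} \<times> {..<m}. \<beta> k = z (snd k) then emeasure M (codebook_event \<beta> B) else 0)"
    by (intro sum.cong refl) (simp add: Int_eq)
  also have "\<dots> = (\<Sum>\<beta>\<in>{\<beta> \<in> codebooks. \<forall>k\<in>{w} \<times> {..<N} \<times> {..<m}. \<beta> k = z (snd k)}.
      emeasure M (codebook_event \<beta> B))"
    by (rule sum.inter_filter[OF finite_codebooks, symmetric])
  finally show ?thesis
    using assms(2) by (simp add: emeasure_codebook_event codebooks_def)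
qed

lemma word_event_disjoint: "disjoint_family_on (word_event w) (sign_patterns N m)"
  unfolding disjoint_family_on_def
proof (intro ballI impI)
  fix z z' assume "z \<in> sign_patterns N m" "z' \<in> sign_patterns N m" "z \<noteq> z'"
  then obtain k where "k \<in> {..<N} \<times> {..<m}" "z k \<noteq> z' k"
    unfolding sign_patterns_def by (metis PiE_ext)
  then show "word_event w z \<inter> word_event w z' = {}"
    unfolding word_event_def by force
qed

lemma AE_word_event_cover:
  assumes "w \<in> {1..C}"
  shows "AE x in M. x \<in> (\<Union>z\<in>sign_patterns N m. word_event w z)"
proof -
  have "1 \<le> C" using assms by simp
  from AE_codebook_bits[OF this] AE_space show ?thesis
  proof eventually_elim
    case (elim x)
    let ?z = "restrict (\<lambda>(i, j). X w i j x) ({..<N} \<times> {..<m})"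
    have "\<forall>i<N. \<forall>j<m. X w i j x \<in> {-1, 1}" using elim(1) assms by blast
    then have "?z \<in> sign_patterns N m" "x \<in> word_event w ?z"
      using elim(2) by (auto simp: sign_patterns_def word_event_def)
    then show ?case by blast
  qed
qed

lemma measure_word_output_event_eq:
  assumes w: "w \<in> {2..C}" and z: "z \<in> sign_patterns N m" "z' \<in> sign_patterns N m"
    and B: "\<forall>i<N. B i \<in> sets lborel"
  shows "prob (word_event w z \<inter> output_event B) = prob (word_event w z' \<inter> output_event B)"
proof -
  let ?K = "{w} \<times> {..<N} \<times> {..<m}"
  have w1: "w \<in> {1..C}" using w by simp
  have "emeasure M (word_event w z \<inter> output_event B) = emeasure M (word_event w z' \<inter> output_event B)"
    unfolding emeasure_word_output_event[OF w1 B]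
  proof (intro sum_sign_fiber_eq)
    show "\<forall>k\<in>?K. z (snd k) \<in> {-1, 1}" "\<forall>k\<in>?K. z' (snd k) \<in> {-1, 1}"
      using z by (auto simp: sign_patterns_def PiE_iff)
    show "ennreal ((1/2) ^ (C * N * m)) * G (\<lambda>i j. \<beta> (1, i, j)) B
        = ennreal ((1/2) ^ (C * N * m)) * G (\<lambda>i j. \<beta>' (1, i, j)) B"
      if "\<And>k. k \<notin> ?K \<Longrightarrow> \<beta> k = \<beta>' k" for \<beta> \<beta>'
    proof -
      have "(1, i, j) \<notin> ?K" for i j using w by auto
      then show ?thesis using that by presburger
    qed
  qed (use w1 in \<open>auto simp: entries_def\<close>)
  then show ?thesis by (simp add: measure_def)
qed

lemma measure_word_output_event:
  assumes w: "w \<in> {2..C}" and z: "z \<in> sign_patterns N m" and B: "\<forall>i<N. B i \<in> sets lborel"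
  shows "prob (word_event w z \<inter> output_event B) = (1/2) ^ (N * m) * prob (output_event B)"
proof -
  have w1: "w \<in> {1..C}" using w by simp
  have "(\<Union>z'\<in>sign_patterns N m. word_event w z' \<inter> output_event B) \<in> events"
    using B finite_sign_patterns sets_word_event sets_output_event by (intro sets.finite_UN sets.Int) auto
  then have "prob (output_event B) = prob (\<Union>z'\<in>sign_patterns N m. word_event w z' \<inter> output_event B)"
    using AE_word_event_cover[OF w1] sets_output_event[OF B]
    by (intro measure_eq_AE) (auto elim: eventually_mono)
  also have "\<dots> = (\<Sum>z'\<in>sign_patterns N m. prob (word_event w z' \<inter> output_event B))"
  proof (intro finite_measure_finite_Union)
    show "disjoint_family_on (\<lambda>z'. word_event w z' \<inter> output_event B) (sign_patterns N m)"
      using word_event_disjoint[of w] unfolding disjoint_family_on_def by blast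
  qed (use B finite_sign_patterns sets_word_event sets_output_event in auto)
  also have "\<dots> = 2 ^ (N * m) * prob (word_event w z \<inter> output_event B)"
    using measure_word_output_event_eq[OF w _ z B] by (simp add: card_sign_patterns)
  finally show ?thesis by (simp add: power_one_over field_simps)
qed

definition output_rects :: "'a set set" where
  "output_rects = {output_event B | B. \<forall>i<N. B i \<in> sets lborel}"

lemma output_rects_subset_events: "output_rects \<subseteq> events"
  unfolding output_rects_def using sets_output_event by blast

lemma output_rects_Pow: "output_rects \<subseteq> Pow (space M)"
  using output_rects_subset_events sets.sets_into_space by blast

lemma sets_sigma_output_rects: "sets (sigma (space M) output_rects) = sigma_sets (space M) output_rects"
  using output_rects_Pow by (rule sets_measure_of)

lemma space_sigma_output_rects: "space (sigma (space M) output_rects) = space M"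
  using output_rects_Pow by (rule space_measure_of)

lemma Int_stable_output_rects: "Int_stable output_rects"
proof (rule Int_stableI)
  fix R R' assume "R \<in> output_rects" "R' \<in> output_rects"
  then obtain B B' where "\<forall>i<N. B i \<in> sets lborel" "R = output_event B"
    "\<forall>i<N. B' i \<in> sets lborel" "R' = output_event B'"
    unfolding output_rects_def by blast
  moreover have "output_event B \<inter> output_event B' = output_event (\<lambda>i. B i \<inter> B' i)"
    by (auto simp: output_event_def)
  ultimately show "R \<inter> R' \<in> output_rects"
    unfolding output_rects_def by (intro CollectI exI[of _ "\<lambda>i. B i \<inter> B' i"]) auto
qed

lemma space_in_output_rects: "space M \<in> output_rects"
proof -
  have "space M = output_event (\<lambda>_. UNIV)" by (auto simp: output_event_def)
  then show ?thesis unfolding output_rects_def by auto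
qed

lemma integral_mult_indicator_word_event:
  fixes h :: "'a \<Rightarrow> real"
  assumes "w \<in> {2..C}" "z \<in> sign_patterns N m"
    and "h \<in> borel_measurable (sigma (space M) output_rects)" "\<And>x. 0 \<le> h x"
  shows "(\<integral>x. h x * indicator (word_event w z) x \<partial>M) = (1/2) ^ (N * m) * (\<integral>x. h x \<partial>M)"
proof (rule integral_mult_indicator_indep_generator
    [OF Int_stable_output_rects output_rects_subset_events space_in_output_rects sets_word_event])
  fix R assume "R \<in> output_rects"
  then show "prob (word_event w z \<inter> R) = (1/2) ^ (N * m) * prob R"
    unfolding output_rects_def using measure_word_output_event[OF assms(1,2)] by auto
qed (use assms in auto)

context
  fixes L :: "nat \<Rightarrow> 'y \<Rightarrow> real"
  assumes L_measurable[measurable]: "\<And>j. L j \<in> borel_measurable borel"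
begin

lemma
  shows space_Tsigma: "space (Tsigma M N m Y L) = space M"
    and sets_Tsigma: "sets (Tsigma M N m Y L) \<subseteq> sets (sigma (space M) output_rects)"
proof -
  let ?T = "\<Union>i\<in>{..<N}. \<Union>j\<in>{..<m}. {(\<lambda>x. L j (Y i x)) -` A \<inter> space M | A. A \<in> sets borel}"
  have "?T \<subseteq> output_rects"
  proof clarify
    fix i j A assume "i < N" "j < m" "A \<in> sets (borel :: real measure)"
    then have "(\<lambda>x. L j (Y i x)) -` A \<inter> space M = output_event (\<lambda>k. if k = i then L j -` A else UNIV)"
      "\<forall>k<N. (if k = i then L j -` A else UNIV) \<in> sets lborel"
      by (auto simp: output_event_def measurable_sets_borel[OF L_measurable])
    then show "(\<lambda>x. L j (Y i x)) -` A \<inter> space M \<in> output_rects"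
      unfolding output_rects_def by blast
  qed
  with output_rects_Pow show "space (Tsigma M N m Y L) = space M"
    "sets (Tsigma M N m Y L) \<subseteq> sets (sigma (space M) output_rects)"
    unfolding Tsigma_def by (auto simp: sigma_sets_mono')
qed

lemma subalgebra_Tsigma: "subalgebra (sigma (space M) output_rects) (Tsigma M N m Y L)"
  using space_Tsigma sets_Tsigma space_sigma_output_rects by (auto simp: subalgebra_def)

lemma subalgebra_M_Tsigma: "subalgebra M (Tsigma M N m Y L)"
proof -
  have "sets (sigma (space M) output_rects) \<subseteq> events"
    unfolding sets_sigma_output_rects by (rule sets.sigma_sets_subset[OF output_rects_subset_events])
  then show ?thesis using space_Tsigma sets_Tsigma by (auto simp: subalgebra_def)
qed

lemma borel_measurable_Tsigma:
  assumes "i < N" "j < m"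
  shows "(\<lambda>x. L j (Y i x)) \<in> borel_measurable (Tsigma M N m Y L)"
proof (rule measurableI)
  fix A :: "real set" assume "A \<in> sets borel"
  then have "(\<lambda>x. L j (Y i x)) -` A \<inter> space M \<in> sigma_sets (space M)
      (\<Union>i\<in>{..<N}. \<Union>j\<in>{..<m}. {(\<lambda>x. L j (Y i x)) -` A \<inter> space M | A. A \<in> sets borel})"
    using assms by (intro sigma_sets.Basic) blast
  then show "(\<lambda>x. L j (Y i x)) -` A \<inter> space (Tsigma M N m Y L) \<in> sets (Tsigma M N m Y L)"
    unfolding space_Tsigma unfolding Tsigma_def by (subst sets_measure_of) auto
qed simp

theorem real_cond_exp_exp_orb_metric:
  assumes w: "w \<in> {2..C}" and \<theta>: "\<theta> \<le> 0"
  shows "AE x in M. real_cond_exp M (Tsigma M N m Y L)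
    (\<lambda>x. exp (real N * \<theta> * orb_metric N m (\<lambda>i j. L j (Y i x)) (\<lambda>i j. X w i j x))) x
    = orb_cond_mgf N m \<theta>"
proof -
  define \<phi> where "\<phi> z x = exp (real N * \<theta> * orb_metric N m (\<lambda>i j. L j (Y i x)) (\<lambda>i j. z (i, j)))"
    for z :: "nat \<times> nat \<Rightarrow> int" and x
  have w1: "w \<in> {1..C}" using w by simp
  have "AE x in M. real_cond_exp M (Tsigma M N m Y L)
      (\<lambda>x. exp (real N * \<theta> * orb_metric N m (\<lambda>i j. L j (Y i x)) (\<lambda>i j. X w i j x))) x
    = (1/2) ^ (N * m) * (\<Sum>z\<in>sign_patterns N m. \<phi> z x)"
  proof (rule real_cond_exp_indep_partition[OF subalgebra_M_Tsigma finite_sign_patterns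
        sets_word_event word_event_disjoint AE_word_event_cover[OF w1], where B = 1])
    fix z and h :: "'a \<Rightarrow> real"
    assume "z \<in> sign_patterns N m" "h \<in> borel_measurable (Tsigma M N m Y L)" "\<And>x. 0 \<le> h x"
    then show "(\<integral>x. h x * indicator (word_event w z) x \<partial>M) = (1/2) ^ (N * m) * (\<integral>x. h x \<partial>M)"
      using w measurable_from_subalg[OF subalgebra_Tsigma] by (intro integral_mult_indicator_word_event)
  next
    fix z
    have "(\<lambda>x. orb_metric N m (\<lambda>i j. L j (Y i x)) (\<lambda>i j. z (i, j))) \<in> borel_measurable (Tsigma M N m Y L)"
      using borel_measurable_orb_metric[where T = "\<lambda>i j x. L j (Y i x)" and Z = "\<lambda>i j x. z (i, j)"]
        borel_measurable_Tsigma by simp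
    then show "\<phi> z \<in> borel_measurable (Tsigma M N m Y L)"
      unfolding \<phi>_def by measurable
  next
    fix z x
    have "real N * \<theta> * orb_metric N m (\<lambda>i j. L j (Y i x)) (\<lambda>i j. z (i, j)) \<le> 0"
      using \<theta> by (intro mult_nonpos_nonneg mult_nonneg_nonpos orb_metric_nonneg) auto
    then show "\<phi> z x \<le> 1" "0 \<le> \<phi> z x" by (auto simp: \<phi>_def)
  next
    fix z x assume "x \<in> word_event w z"
    then show "exp (real N * \<theta> * orb_metric N m (\<lambda>i j. L j (Y i x)) (\<lambda>i j. X w i j x)) = \<phi> z x"
      unfolding \<phi>_def word_event_def by (auto intro!: orb_metric_cong)
  next
    have "(\<lambda>x. orb_metric N m (\<lambda>i j. L j (Y i x)) (\<lambda>i j. X w i j x)) \<in> borel_measurable M"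
      by (intro borel_measurable_orb_metric) measurable
    then show "(\<lambda>x. exp (real N * \<theta> * orb_metric N m (\<lambda>i j. L j (Y i x)) (\<lambda>i j. X w i j x)))
        \<in> borel_measurable M"
      by measurable
  qed
  then show ?thesis
    by (simp add: \<phi>_def sum_exp_orb_metric_sign_patterns orb_cond_mgf_def)
qed

end

end

lemma eventually_le_csize:
  assumes "R > 0"
  shows "eventually (\<lambda>N. w \<le> csize R N) sequentially"
proof -
  have "eventually (\<lambda>N. real w / R \<le> real N) sequentially"
    using filterlim_real_sequentially by (simp add: filterlim_at_top)
  then show ?thesis
  proof eventually_elim
    case (elim N)
    then have "real w \<le> real N * R" using assms by (simp add: field_simps)
    also have "\<dots> \<le> exp (real N * R)" using exp_ge_add_one_self[of "real N * R"] by linarith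
    also have "\<dots> \<le> real (csize R N)" unfolding csize_def by (rule real_nat_ceiling_ge)
    finally show ?case by simp
  qed
qed

lemma borel_measurable_llr:
  assumes "\<And>s. s \<in> S \<Longrightarrow> p s \<in> borel_measurable lborel"
  shows "llr S \<mu> m p j \<in> borel_measurable borel"
proof -
  have "qfun S \<mu> m p j b \<in> borel_measurable borel" for b
    unfolding qfun_def[abs_def] using assms by (intro borel_measurable_times borel_measurable_sum) auto
  then show ?thesis unfolding llr_def[abs_def] by measurable
qed

lemma codeword_output_law_UNIV:
  assumes "bij_betw \<mu> (bitvecs m) S" "\<And>s. s \<in> S \<Longrightarrow> (\<integral>\<^sup>+ y. ennreal (p s y) \<partial>lborel) = 1"
    and "\<forall>i<N. \<forall>j<m. b i j \<in> {-1, 1}"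
  shows "(\<Prod>i<N. \<integral>\<^sup>+ y \<in> UNIV. ennreal (p (\<mu> (map (b i) [0..<m])) y) \<partial>lborel) = 1"
proof (intro prod.neutral ballI)
  fix i assume "i \<in> {..<N}"
  then have "\<forall>j<m. b i j \<in> {-1, 1}" using assms(3) by simp
  then have "map (b i) [0..<m] \<in> bitvecs m" by (auto simp: bitvecs_def)
  then have "\<mu> (map (b i) [0..<m]) \<in> S" by (rule bij_betw_apply[OF assms(1)])
  then show "(\<integral>\<^sup>+ y \<in> UNIV. ennreal (p (\<mu> (map (b i) [0..<m])) y) \<partial>lborel) = 1"
    using assms(2) by simp
qed

theorem lemma9:
  fixes M :: "'a measure"
    and S :: "'s set" and \<mu> :: "int list \<Rightarrow> 's" and m :: nat
    and p :: "'s \<Rightarrow> real^'d \<Rightarrow> real"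
    and R :: real and \<theta> :: real and w' :: nat
    and X :: "nat \<Rightarrow> nat \<Rightarrow> nat \<Rightarrow> nat \<Rightarrow> 'a \<Rightarrow> int"
    and Y :: "nat \<Rightarrow> nat \<Rightarrow> 'a \<Rightarrow> real^'d"
  assumes m: "m \<ge> 1"
    and S: "finite S" "card S = 2 ^ m"
    and mu: "bij_betw \<mu> (bitvecs m) S"
    and dens: "\<And>s. s \<in> S \<Longrightarrow> p s \<in> borel_measurable lborel"
              "\<And>s y. s \<in> S \<Longrightarrow> 0 \<le> p s y"
              "\<And>s. s \<in> S \<Longrightarrow> (\<integral>\<^sup>+ y. ennreal (p s y) \<partial>lborel) = 1"
    and A1: "\<And>j. j < m \<Longrightarrow> \<exists>M1>0. \<exists>a>0. \<exists>S1::real poly. \<forall>y. norm y > M1 \<longrightarrow>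
               (\<forall>b\<in>{-1,1}. qfun S \<mu> m p j b y < poly S1 (norm y) * exp (- a * norm y))"
    and A2: "\<And>j. j < m \<Longrightarrow> \<exists>M2>0. \<exists>S2::real poly. \<forall>y. norm y > M2 \<longrightarrow>
               \<bar>llr S \<mu> m p j y\<bar> < poly S2 (norm y)"
    and A3: "\<And>j. j < m \<Longrightarrow> smooth_cdf (Psi S \<mu> m p j)"
            "smooth_cdf (Psibar S \<mu> m p)"
    and prob: "prob_space M"
    and Xmeas: "\<And>N w i j. X N w i j \<in> measurable M (count_space UNIV)"
    and Ymeas: "\<And>N i. Y N i \<in> borel_measurable M"
    and law: "\<And>N b A. (\<forall>w\<in>{1..csize R N}. \<forall>i<N. \<forall>j<m. b w i j \<in> {-1, 1}) \<Longrightarrow>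
               (\<forall>i<N. A i \<in> sets lborel) \<Longrightarrow>
               emeasure M {x \<in> space M. (\<forall>w\<in>{1..csize R N}. \<forall>i<N. \<forall>j<m. X N w i j x = b w i j)
                                       \<and> (\<forall>i<N. Y N i x \<in> A i)}
               = ennreal ((1/2) ^ (csize R N * N * m)) *
                 (\<Prod>i<N. \<integral>\<^sup>+ y \<in> A i. ennreal (p (\<mu> (map (b 1 i) [0..<m])) y) \<partial>lborel)"
    and R: "R > 0"
    and w': "w' \<ge> 1" "w' \<noteq> 1"
    and theta: "\<theta> < 0"
  shows "AE x in M.
    (\<lambda>N. ln (real_cond_exp M (Tsigma M N m (Y N) (llr S \<mu> m p))
              (\<lambda>x. exp (real N * \<theta> *
                 orb_metric N m (\<lambda>i j. llr S \<mu> m p j (Y N i x)) (\<lambda>i j. X N w' i j x))) x) / real N)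
    \<longlonglongrightarrow> real m * integral {0..1} (\<lambda>t. ln (1 + exp (\<theta> / real m * t))) - real m * ln 2"
proof -
  have codebook: "random_codebook M (csize R N) N m (X N) (Y N)
      (\<lambda>b B. \<Prod>i<N. \<integral>\<^sup>+ y \<in> B i. ennreal (p (\<mu> (map (b i) [0..<m])) y) \<partial>lborel)" for N
    by (intro random_codebook.intro random_codebook_axioms.intro prob Xmeas Ymeas law
        codeword_output_law_UNIV[OF mu dens(3)])
  have cond_exp: "eventually (\<lambda>N. AE x in M. real_cond_exp M (Tsigma M N m (Y N) (llr S \<mu> m p))
      (\<lambda>x. exp (real N * \<theta> * orb_metric N m (\<lambda>i j. llr S \<mu> m p j (Y N i x)) (\<lambda>i j. X N w' i j x))) x
    = orb_cond_mgf N m \<theta>) sequentially"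
    using eventually_le_csize[OF R, of w']
    by eventually_elim
      (use w' theta in \<open>auto intro!: random_codebook.real_cond_exp_exp_orb_metric[OF codebook]
        borel_measurable_llr dens(1)\<close>)
  have lim: "(\<lambda>N. ln (orb_cond_mgf N m \<theta>) / real N)
      \<longlonglongrightarrow> real m * integral {0..1} (\<lambda>t. ln (1 + exp (\<theta> / real m * t))) - real m * ln 2"
    using m theta by (intro ln_orb_cond_mgf_tendsto) auto
  from AE_eventually_sequentially[OF cond_exp] show ?thesis
  proof eventually_elim
    case (elim x)
    show ?case
      by (rule Lim_transform_eventually[OF lim]) (use elim in \<open>auto elim: eventually_mono\<close>)
  qed
qed

end
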